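(* Let $\omega\subset\mathbb{R}^d\times\mathbb{R}^d$ be a domain (not necessarily bounded), $T>0$, $\omega_T=(0,T]\times\omega$, and $0<\lambda<\Lambda$. Let $A(t,x,v)$ (symmetric $d\times d$ matrix) and $B(t,x,v)\in\mathbb{R}^d$ be continuous on $\omega_T$ with $\lambda|\xi|^2\le A\xi\cdot\xi\le\Lambda|\xi|^2$ and $|B\cdot\xi|\le\Lambda\langle v\rangle|\xi|$ for all $\xi\in\mathbb{R}^d$ and $(t,x,v)\in\omega_T$. If $f\in\mathcal{C}^2_{\rm kin}(\omega_T)\cap\mathcal{C}^0(\overline{\omega_T})$ is bounded and satisfies \[ (\partial_t+v\cdot\nabla_x)f-\mathrm{tr}(AD_v^2f)-B\cdot\nabla_vf\le0\quad\text{in }\omega_T, \] then $\sup_{\omega_T}f\le\sup_{\partial_p\omega_T}f$, where $\partial_p\omega_T=[0,T]\times\overline{\omega}\setminus(0,T]\times\omega$.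
   Context: $\langle v\rangle=(1+|v|^2)^{1/2}$. $\mathcal{C}^2_{\rm kin}(\omega_T)$ denotes continuous functions $f$ on $\omega_T$ for which $\nabla_vf$, $D_v^2f$ and the transport derivative $(\partial_t+v\cdot\nabla_x)f$ exist and are continuous on $\omega_T$. *)

theory Defs
  imports "HOL-Analysis.Analysis"
begin

definition japanese :: "real^'n \<Rightarrow> real" where
  "japanese v = sqrt (1 + (norm v)\<^sup>2)"

definition cyl :: "real \<Rightarrow> ((real^'n) \<times> (real^'n)) set \<Rightarrow> (real \<times> ((real^'n) \<times> (real^'n))) set" where
  "cyl T \<omega> = {0<..T} \<times> \<omega>"

definition parabolic_boundary ::
  "real \<Rightarrow> ((real^'n) \<times> (real^'n)) set \<Rightarrow> (real \<times> ((real^'n) \<times> (real^'n))) set" where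
  "parabolic_boundary T \<omega> = ({0..T} \<times> closure \<omega>) - ({0<..T} \<times> \<omega>)"

text \<open>f is in C^2_kin(omega_T), with transport derivative Tf, velocity gradient Gv and velocity
  Hessian Hv (Hv p $ i $ j = d_{v_j} d_{v_i} f). At t = T the transport derivative is one-sided
  (from the left), since omega_T contains the top time slice.\<close>
definition kin_C2 ::
  "real \<Rightarrow> ((real^'n) \<times> (real^'n)) set \<Rightarrow> (real \<times> ((real^'n) \<times> (real^'n)) \<Rightarrow> real)
   \<Rightarrow> (real \<times> ((real^'n) \<times> (real^'n)) \<Rightarrow> real)
   \<Rightarrow> (real \<times> ((real^'n) \<times> (real^'n)) \<Rightarrow> real^'n)
   \<Rightarrow> (real \<times> ((real^'n) \<times> (real^'n)) \<Rightarrow> real^'n^'n) \<Rightarrow> bool" where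
  "kin_C2 T \<omega> f Tf Gv Hv \<longleftrightarrow>
     continuous_on (cyl T \<omega>) f \<and>
     continuous_on (cyl T \<omega>) Tf \<and>
     continuous_on (cyl T \<omega>) Gv \<and>
     continuous_on (cyl T \<omega>) Hv \<and>
     (\<forall>t x v. (t, (x, v)) \<in> cyl T \<omega> \<longrightarrow>
        ((\<lambda>s. f (t + s, (x + s *\<^sub>R v, v))) has_real_derivative Tf (t, (x, v)))
           (at 0 within {s. t + s \<le> T}) \<and>
        ((\<lambda>w. f (t, (x, w))) has_derivative (\<lambda>h. Gv (t, (x, v)) \<bullet> h)) (at v) \<and>
        ((\<lambda>w. Gv (t, (x, w))) has_derivative (\<lambda>h. Hv (t, (x, v)) *v h)) (at v))"

end

theory Submission
  imports Defs
begin

(* Suppose f exceeded M, the supremum over the parabolic boundary, at some point p. Subtract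
   eps * phi with the barrier phi = exp (C t) (1 + |x|^2 + |v|^2): for small eps the function
   g = f - eps * phi still exceeds M at p and tends to -infinity as |(x, v)| grows, so it attains
   its maximum over the closed cylinder, at a point q off the parabolic boundary. There the
   transport derivative of g is nonnegative (only backward in time if q lies on the top slice),
   grad_v g = 0 and D_v^2 g <= 0, hence tr (A D_v^2 g) <= 0 because A is positive semidefinite.
   For C large the barrier is a strict supersolution, so with L the kinetic operator,
   L f = L g + eps * L phi > 0 at q, contradicting the subsolution inequality. *)

lemma matrix_vector_mult_axis_inner_axis:
  fixes A :: "real^'n^'n"
  shows "(A *v axis i a) \<bullet> axis j b = a * b * A$j$i"
proof -
  have "axis i a = a *\<^sub>R axis i (1::real)" by (simp add: vec_eq_iff axis_def)
  then show ?thesis by (simp add: matrix_vector_mult_scaleR matrix_vector_mult_basis inner_axis column_def)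
qed

lemma psd_diag_nonneg:
  fixes A :: "real^'n^'n"
  assumes "\<forall>\<xi>. 0 \<le> (A *v \<xi>) \<bullet> \<xi>"
  shows "0 \<le> A$k$k"
  using assms[rule_format, of "axis k 1"] by (simp add: matrix_vector_mult_axis_inner_axis)

lemma diag_le_of_quadratic_form_le:
  fixes M :: "real^'n^'n"
  assumes "\<forall>\<xi>. (M *v \<xi>) \<bullet> \<xi> \<le> Lam * (norm \<xi>)\<^sup>2"
  shows "M$i$i \<le> Lam"
  using assms[rule_format, of "axis i 1"] by (simp add: matrix_vector_mult_axis_inner_axis)

lemma trace_le_of_quadratic_form_le:
  fixes M :: "real^'n^'n"
  assumes "\<forall>\<xi>. (M *v \<xi>) \<bullet> \<xi> \<le> Lam * (norm \<xi>)\<^sup>2"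
  shows "trace M \<le> real CARD('n) * Lam"
  unfolding trace_def using sum_bounded_above[of UNIV "\<lambda>i. M$i$i" Lam] diag_le_of_quadratic_form_le[OF assms]
  by simp

lemma symmetric_matrix_entry:
  fixes A :: "'a^'n^'n"
  assumes "transpose A = A"
  shows "A$i$j = A$j$i"
  by (metis assms transpose_def vec_lambda_beta)

lemma symmetric_psd_zero_diag_row:
  fixes A :: "real^'n^'n"
  assumes sym: "transpose A = A" and psd: "\<forall>\<xi>. 0 \<le> (A *v \<xi>) \<bullet> \<xi>" and zero: "A$k$k = 0"
  shows "A$k$j = 0"
proof (rule ccontr)
  assume ne: "A$k$j \<noteq> 0"
  define s where "s = - (A$j$j + 1) / (2 * A$k$j)"
  have "0 \<le> (A *v (axis k s + axis j 1)) \<bullet> (axis k s + axis j 1)" using psd by blast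
  also have "\<dots> = 2 * s * A$k$j + A$j$j"
    by (simp add: matrix_vector_right_distrib inner_add matrix_vector_mult_axis_inner_axis zero
        symmetric_matrix_entry[OF sym, of j k])
  also have "\<dots> = -1" using ne by (simp add: s_def field_simps)
  finally show False by simp
qed

lemma symmetric_column_eq_row:
  fixes A :: "real^'n^'n"
  assumes "transpose A = A"
  shows "column k A = A$k"
  by (metis assms row_def row_transpose vec_nth_inverse)

lemma rank_one_quadratic_form:
  fixes u \<xi> :: "real^'n"
  shows "((\<chi> i j. u$i * u$j) *v \<xi>) \<bullet> \<xi> = (u \<bullet> \<xi>)\<^sup>2"
  by (simp add: matrix_vector_mult_def inner_vec_def power2_eq_square sum_distrib_left sum_distrib_right algebra_simps)

lemma trace_rank_one_mult:
  fixes u :: "real^'n" and H :: "real^'n^'n"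
  shows "trace ((\<chi> i j. u$i * u$j) ** H) = (H *v u) \<bullet> u"
proof -
  have "trace ((\<chi> i j. u$i * u$j) ** H) = (\<Sum>i\<in>UNIV. \<Sum>j\<in>UNIV. u$i * u$j * H$j$i)"
    by (simp add: trace_def matrix_matrix_mult_def sum_distrib_left mult.assoc)
  also have "\<dots> = (\<Sum>j\<in>UNIV. \<Sum>i\<in>UNIV. u$i * u$j * H$j$i)"
    by (rule sum.swap)
  also have "\<dots> = (H *v u) \<bullet> u"
    by (simp add: matrix_vector_mult_def inner_vec_def sum_distrib_left algebra_simps)
  finally show ?thesis .
qed

lemma trace_diff_scaleR_mult:
  fixes A B C :: "real^'n^'n"
  shows "trace ((B - c *\<^sub>R C) ** A) = trace (B ** A) - c * trace (C ** A)"
  by (simp add: trace_def matrix_matrix_mult_def sum_subtractf sum_distrib_left algebra_simps)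

(* Cholesky-style induction on the rows where A may be nonzero: A splits into the rank-one
   matrix (A$k)(A$k)^T / A$k$k, which contributes (H (A$k)) . (A$k) / A$k$k >= 0 to the trace,
   plus a positive semidefinite Schur complement whose row k vanishes. *)

lemma trace_mult_scaleR_mat_1:
  fixes M :: "real^'n^'n"
  shows "trace (M ** (c *\<^sub>R mat 1)) = c * trace M"
  by (simp add: trace_def matrix_matrix_mult_def mat_def sum_distrib_left if_distrib mult.commute cong: if_cong)

lemma schur_complement_psd:
  fixes A :: "real^'n^'n"
  assumes sym: "transpose A = A" and psd: "\<forall>\<xi>. 0 \<le> (A *v \<xi>) \<bullet> \<xi>" and pos: "0 < A$k$k"
  shows "0 \<le> ((A - (1 / A$k$k) *\<^sub>R (\<chi> i j. A$k$i * A$k$j)) *v \<xi>) \<bullet> \<xi>"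
proof -
  define a w where "a = A$k$k" and "w = A$k \<bullet> \<xi>"
  define c where "c = w / a"
  have "axis k c = c *\<^sub>R axis k (1::real)" by (simp add: vec_eq_iff axis_def)
  then have "A *v axis k c = c *\<^sub>R A$k"
    by (simp add: matrix_vector_mult_scaleR matrix_vector_mult_basis symmetric_column_eq_row[OF sym])
  then have "(A *v (\<xi> - axis k c)) \<bullet> (\<xi> - axis k c) = (A *v \<xi>) \<bullet> \<xi> - 2 * c * w + c * c * a"
    by (simp add: matrix_vector_mult_axis_inner_axis inner_axis
        inner_axis' matrix_vector_mul_component a_def w_def inner_commute algebra_simps)
  also have "\<dots> = (A *v \<xi>) \<bullet> \<xi> - w\<^sup>2 / a"
    using pos by (simp add: c_def a_def field_simps power2_eq_square)
  also have "\<dots> = ((A - (1 / a) *\<^sub>R (\<chi> i j. A$k$i * A$k$j)) *v \<xi>) \<bullet> \<xi>"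
    by (simp add: matrix_vector_mult_diff_rdistrib scaleR_matrix_vector_assoc[symmetric] inner_diff_left
        rank_one_quadratic_form w_def)
  finally show ?thesis using psd a_def by metis
qed

lemma trace_mult_psd_nonneg_rows:
  fixes A H :: "real^'n^'n"
  assumes "finite I" and "transpose A = A" and "\<forall>\<xi>. 0 \<le> (A *v \<xi>) \<bullet> \<xi>"
    and "\<And>i. i \<notin> I \<Longrightarrow> A$i = 0" and H: "\<forall>\<xi>. 0 \<le> (H *v \<xi>) \<bullet> \<xi>"
  shows "0 \<le> trace (A ** H)"
  using assms(1-4)
proof (induction I arbitrary: A rule: finite_induct)
  case empty
  then have "A = 0" by (simp add: vec_eq_iff)
  then show ?case by (simp add: trace_def)
next
  case (insert k I)
  note sym = insert.prems(1) and psd = insert.prems(2)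
  show ?case
  proof (cases "A$k$k = 0")
    case True
    then have "A$k = 0"
      using symmetric_psd_zero_diag_row[OF sym psd] by (simp add: vec_eq_iff)
    then show ?thesis using insert by (metis insertE)
  next
    case False
    define a where "a = A$k$k"
    then have a: "0 < a" using False psd_diag_nonneg[OF psd] by (simp add: order_le_neq_trans)
    define A' where "A' = A - (1 / a) *\<^sub>R (\<chi> i j. A$k$i * A$k$j)"
    have "transpose A' = A'"
      using symmetric_matrix_entry[OF sym] by (simp add: A'_def transpose_def vec_eq_iff mult.commute)
    moreover have "\<forall>\<xi>. 0 \<le> (A' *v \<xi>) \<bullet> \<xi>"
      using schur_complement_psd[OF sym psd] a by (simp add: A'_def a_def)
    moreover have "A'$i = 0" if "i \<notin> I" for i
    proof (cases "i = k")
      case True then show ?thesis using a by (simp add: A'_def a_def vec_eq_iff)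
    next
      case False
      then have "A$i = 0" using that insert.prems(3) by simp
      then show ?thesis using symmetric_matrix_entry[OF sym, of k i] by (simp add: A'_def vec_eq_iff)
    qed
    ultimately have "0 \<le> trace (A' ** H)" by (rule insert.IH)
    moreover have "0 \<le> (H *v A$k) \<bullet> A$k" using H by blast
    moreover have "trace (A ** H) = trace (A' ** H) + (1 / a) * ((H *v A$k) \<bullet> A$k)"
      by (simp add: A'_def trace_diff_scaleR_mult trace_rank_one_mult)
    ultimately show ?thesis using a by simp
  qed
qed

lemma trace_mult_psd_nonneg:
  fixes A H :: "real^'n^'n"
  assumes "transpose A = A" and "\<forall>\<xi>. 0 \<le> (A *v \<xi>) \<bullet> \<xi>" and "\<forall>\<xi>. 0 \<le> (H *v \<xi>) \<bullet> \<xi>"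
  shows "0 \<le> trace (A ** H)"
  using trace_mult_psd_nonneg_rows[of UNIV A H] assms by simp

lemma trace_mult_nsd_nonpos:
  fixes A H :: "real^'n^'n"
  assumes "transpose A = A" and "\<forall>\<xi>. 0 \<le> (A *v \<xi>) \<bullet> \<xi>" and "\<forall>\<xi>. (H *v \<xi>) \<bullet> \<xi> \<le> 0"
  shows "trace (A ** H) \<le> 0"
proof -
  have "0 \<le> trace (A ** (- H))"
    using assms by (intro trace_mult_psd_nonneg) (auto simp: matrix_vector_mult_def inner_vec_def sum_negf)
  then show ?thesis
    by (simp add: trace_def matrix_matrix_mult_def sum_negf)
qed

lemma DERIV_left_local_max_nonneg:
  fixes h :: "real \<Rightarrow> real"
  assumes deriv: "(h has_real_derivative D) (at x within S)" and "0 < \<delta>"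
    and max: "\<And>s. x - \<delta> < s \<Longrightarrow> s \<le> x \<Longrightarrow> s \<in> S \<and> h s \<le> h x"
  shows "0 \<le> D"
proof (rule ccontr)
  assume "\<not> 0 \<le> D"
  then obtain d where d: "0 < d" "\<forall>s>0. x - s \<in> S \<longrightarrow> s < d \<longrightarrow> h x < h (x - s)"
    using has_real_derivative_neg_dec_left[OF deriv] by force
  define s where "s = min d \<delta> / 2"
  have "0 < s" "s < d" "s < \<delta>" using d \<open>0 < \<delta>\<close> by (auto simp: s_def)
  then show False using d max[of "x - s"] by force
qed

lemma DERIV2_local_max_nonpos:
  fixes h h' :: "real \<Rightarrow> real"
  assumes "0 < \<delta>" and deriv: "\<And>s. \<bar>s - x\<bar> < \<delta> \<Longrightarrow> (h has_real_derivative h' s) (at s)"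
    and crit: "h' x = 0" and deriv2: "(h' has_real_derivative c) (at x)"
    and max: "\<And>s. \<bar>s - x\<bar> < \<delta> \<Longrightarrow> h s \<le> h x"
  shows "c \<le> 0"
proof (rule ccontr)
  assume "\<not> c \<le> 0"
  then obtain d where d: "0 < d" "\<forall>s>0. s < d \<longrightarrow> h' x < h' (x + s)"
    using DERIV_pos_inc_right[OF deriv2] by force
  define s where "s = min d \<delta> / 2"
  have s: "0 < s" "s < d" "s < \<delta>" using d \<open>0 < \<delta>\<close> by (auto simp: s_def)
  then obtain z where z: "x < z" "z < x + s" "h (x + s) - h x = s * h' z"
    using MVT2[of x "x + s" h h'] deriv by force
  have "0 < h' z" using d(2)[rule_format, of "z - x"] crit z s by simp
  then have "h x < h (x + s)" using z s by (simp add: algebra_simps)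
  then show False using max[of "x + s"] s by simp
qed

lemma has_vector_derivative_along_line:
  assumes "(F has_derivative F') (at (z + s *\<^sub>R w))"
  shows "((\<lambda>s. F (z + s *\<^sub>R w)) has_vector_derivative F' w) (at s)"
proof -
  have "((\<lambda>s. z + s *\<^sub>R w) has_vector_derivative w) (at s)"
    by (auto intro!: derivative_eq_intros)
  from vector_derivative_diff_chain_within[OF this has_derivative_at_withinI[OF assms]]
  show ?thesis by (simp add: o_def)
qed

lemma open_contains_line_segment:
  fixes S :: "'a::real_normed_vector set"
  assumes "open S" and "z \<in> S"
  obtains \<delta> where "0 < \<delta>" and "\<And>s. \<bar>s\<bar> < \<delta> \<Longrightarrow> z + s *\<^sub>R w \<in> S"
proof -
  have "open ((\<lambda>s. z + s *\<^sub>R w) -` S)"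
    using assms(1) by (intro continuous_open_vimage continuous_intros)
  moreover have "0 \<in> (\<lambda>s. z + s *\<^sub>R w) -` S" using assms(2) by simp
  ultimately obtain \<delta> where "0 < \<delta>" "ball 0 \<delta> \<subseteq> (\<lambda>s. z + s *\<^sub>R w) -` S"
    by (meson open_contains_ball)
  then show ?thesis using that by (auto simp: subset_eq)
qed

lemma continuous_attains_sup_off_compact:
  fixes g :: "'a::t2_space \<Rightarrow> real"
  assumes "closed S" and "compact K" and "continuous_on S g" and "p \<in> S"
    and off: "\<And>y. y \<in> S \<Longrightarrow> y \<notin> K \<Longrightarrow> g y < g p"
  obtains q where "q \<in> S" and "\<And>y. y \<in> S \<Longrightarrow> g y \<le> g q"
proof (cases "p \<in> K")
  case True
  have "compact (S \<inter> K)" using assms(1,2) by (rule closed_Int_compact)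
  moreover have "S \<inter> K \<noteq> {}" using True assms(4) by blast
  moreover have "continuous_on (S \<inter> K) g" using assms(3) by (rule continuous_on_subset) blast
  ultimately obtain q where q: "q \<in> S \<inter> K" "\<forall>y\<in>S \<inter> K. g y \<le> g q"
    using continuous_attains_sup by blast
  have "g p \<le> g q" using q True assms(4) by blast
  show ?thesis
  proof (rule that)
    show "q \<in> S" using q by blast
    fix y assume "y \<in> S"
    show "g y \<le> g q"
    proof (cases "y \<in> K")
      case True
      then show ?thesis using q \<open>y \<in> S\<close> by blast
    next
      case False
      then show ?thesis using off[OF \<open>y \<in> S\<close> False] \<open>g p \<le> g q\<close> by linarith
    qed
  qed
next
  case False
  then show ?thesis using off assms(4) by blast
qed

lemma kin_C2_pointwise:
  assumes "kin_C2 T \<omega> u Tu Gu Hu" and "(t, x, v) \<in> cyl T \<omega>"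
  shows "((\<lambda>s. u (t + s, x + s *\<^sub>R v, v)) has_real_derivative Tu (t, x, v)) (at 0 within {s. t + s \<le> T})"
    and "((\<lambda>w. u (t, x, w)) has_derivative (\<lambda>h. Gu (t, x, v) \<bullet> h)) (at v)"
    and "((\<lambda>w. Gu (t, x, w)) has_derivative (\<lambda>h. Hu (t, x, v) *v h)) (at v)"
  using assms unfolding kin_C2_def by blast+

lemma kin_C2_max_transport_nonneg:
  assumes u: "kin_C2 T \<omega> u Tu Gu Hu" and \<omega>: "open \<omega>"
    and q: "(t, x, v) \<in> cyl T \<omega>" and max: "\<forall>y\<in>cyl T \<omega>. u y \<le> u (t, x, v)"
  shows "0 \<le> Tu (t, x, v)"
proof -
  have t: "0 < t" "t \<le> T" and xv: "(x, v) \<in> \<omega>" using q by (auto simp: cyl_def)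
  obtain \<delta> where \<delta>: "0 < \<delta>" "\<And>s. \<bar>s\<bar> < \<delta> \<Longrightarrow> (x, v) + s *\<^sub>R (v, 0) \<in> \<omega>"
    using open_contains_line_segment[OF \<omega> xv] by blast
  show ?thesis
  proof (rule DERIV_left_local_max_nonneg[OF kin_C2_pointwise(1)[OF u q]])
    show "0 < min t \<delta>" using t \<delta> by simp
    fix s :: real assume s: "0 - min t \<delta> < s" "s \<le> 0"
    then have "(t + s, x + s *\<^sub>R v, v) \<in> cyl T \<omega>"
      using \<delta>(2)[of s] t by (simp add: cyl_def)
    then show "s \<in> {s. t + s \<le> T} \<and> u (t + s, x + s *\<^sub>R v, v) \<le> u (t + 0, x + 0 *\<^sub>R v, v)"
      using max s t by simp
  qed
qed

lemma kin_C2_max_grad_eq_0: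
  assumes u: "kin_C2 T \<omega> u Tu Gu Hu" and \<omega>: "open \<omega>"
    and q: "(t, x, v) \<in> cyl T \<omega>" and max: "\<forall>y\<in>cyl T \<omega>. u y \<le> u (t, x, v)"
  shows "Gu (t, x, v) = 0"
proof -
  have "open (Pair x -` \<omega>)"
    using \<omega> by (intro continuous_open_vimage continuous_intros)
  moreover have "v \<in> Pair x -` \<omega>" and "\<forall>w\<in>Pair x -` \<omega>. u (t, x, w) \<le> u (t, x, v)"
    using q max by (auto simp: cyl_def)
  ultimately have "(\<lambda>h. Gu (t, x, v) \<bullet> h) = (\<lambda>h. 0)"
    using differential_zero_maxmin[OF _ _ kin_C2_pointwise(2)[OF u q]] by blast
  then show ?thesis by (metis inner_eq_zero_iff)
qed

lemma kin_C2_max_hess_nonpos: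
  assumes u: "kin_C2 T \<omega> u Tu Gu Hu" and \<omega>: "open \<omega>"
    and q: "(t, x, v) \<in> cyl T \<omega>" and max: "\<forall>y\<in>cyl T \<omega>. u y \<le> u (t, x, v)"
  shows "(Hu (t, x, v) *v \<xi>) \<bullet> \<xi> \<le> 0"
proof -
  have t: "0 < t" "t \<le> T" and xv: "(x, v) \<in> \<omega>" using q by (auto simp: cyl_def)
  obtain \<delta> where \<delta>: "0 < \<delta>" "\<And>s. \<bar>s\<bar> < \<delta> \<Longrightarrow> (x, v) + s *\<^sub>R (0, \<xi>) \<in> \<omega>"
    using open_contains_line_segment[OF \<omega> xv] by blast
  have line: "(t, x, v + s *\<^sub>R \<xi>) \<in> cyl T \<omega>" if "\<bar>s - 0\<bar> < \<delta>" for s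
    using \<delta>(2)[of s] t that by (simp add: cyl_def)
  show ?thesis
  proof (rule DERIV2_local_max_nonpos[OF \<delta>(1)])
    fix s :: real assume "\<bar>s - 0\<bar> < \<delta>"
    from has_vector_derivative_along_line[OF kin_C2_pointwise(2)[OF u line[OF this]]]
    show "((\<lambda>s. u (t, x, v + s *\<^sub>R \<xi>)) has_real_derivative Gu (t, x, v + s *\<^sub>R \<xi>) \<bullet> \<xi>) (at s)"
      by (simp add: has_real_derivative_iff_has_vector_derivative)
    show "u (t, x, v + s *\<^sub>R \<xi>) \<le> u (t, x, v + 0 *\<^sub>R \<xi>)"
      using max line[OF \<open>\<bar>s - 0\<bar> < \<delta>\<close>] by simp
  next
    show "Gu (t, x, v + 0 *\<^sub>R \<xi>) \<bullet> \<xi> = 0"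
      using kin_C2_max_grad_eq_0[OF u \<omega> q max] by simp
    have "((\<lambda>w. Gu (t, x, w) \<bullet> \<xi>) has_derivative (\<lambda>h. (Hu (t, x, v) *v h) \<bullet> \<xi>)) (at (v + 0 *\<^sub>R \<xi>))"
      using has_derivative_inner_left[OF kin_C2_pointwise(3)[OF u q]] by simp
    from has_vector_derivative_along_line[OF this]
    show "((\<lambda>s. Gu (t, x, v + s *\<^sub>R \<xi>) \<bullet> \<xi>) has_real_derivative (Hu (t, x, v) *v \<xi>) \<bullet> \<xi>) (at 0)"
      by (simp add: has_real_derivative_iff_has_vector_derivative)
  qed
qed

lemma kin_C2_diff_scaled:
  assumes f: "kin_C2 T \<omega> f Tf Gf Hf" and g: "kin_C2 T \<omega> g Tg Gg Hg"
  shows "kin_C2 T \<omega> (\<lambda>p. f p - c * g p) (\<lambda>p. Tf p - c * Tg p)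
           (\<lambda>p. Gf p - c *\<^sub>R Gg p) (\<lambda>p. Hf p - c *\<^sub>R Hg p)"
  unfolding kin_C2_def
proof (intro conjI allI impI)
  show "continuous_on (cyl T \<omega>) (\<lambda>p. f p - c * g p)" "continuous_on (cyl T \<omega>) (\<lambda>p. Tf p - c * Tg p)"
    "continuous_on (cyl T \<omega>) (\<lambda>p. Gf p - c *\<^sub>R Gg p)" "continuous_on (cyl T \<omega>) (\<lambda>p. Hf p - c *\<^sub>R Hg p)"
    using f g unfolding kin_C2_def
    by (auto intro!: continuous_on_diff continuous_on_mult_left continuous_on_scaleR continuous_on_const)
  fix t x v assume q: "(t, x, v) \<in> cyl T \<omega>"
  note fq = kin_C2_pointwise[OF f q] and gq = kin_C2_pointwise[OF g q]
  show "((\<lambda>s. f (t + s, x + s *\<^sub>R v, v) - c * g (t + s, x + s *\<^sub>R v, v)) has_real_derivative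
      Tf (t, x, v) - c * Tg (t, x, v)) (at 0 within {s. t + s \<le> T})"
    using fq gq by (intro DERIV_diff DERIV_cmult) auto
  have "((\<lambda>w. f (t, x, w) - c * g (t, x, w)) has_derivative
      (\<lambda>h. Gf (t, x, v) \<bullet> h - c * (Gg (t, x, v) \<bullet> h))) (at v)"
    using fq gq by (intro has_derivative_diff has_derivative_mult_right) auto
  then show "((\<lambda>w. f (t, x, w) - c * g (t, x, w)) has_derivative
      (\<lambda>h. (Gf (t, x, v) - c *\<^sub>R Gg (t, x, v)) \<bullet> h)) (at v)"
    by (simp add: inner_diff_left)
  have "((\<lambda>w. Gf (t, x, w) - c *\<^sub>R Gg (t, x, w)) has_derivative
      (\<lambda>h. Hf (t, x, v) *v h - c *\<^sub>R (Hg (t, x, v) *v h))) (at v)"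
    using fq gq by (intro has_derivative_diff has_derivative_scaleR_right) auto
  then show "((\<lambda>w. Gf (t, x, w) - c *\<^sub>R Gg (t, x, w)) has_derivative
      (\<lambda>h. (Hf (t, x, v) - c *\<^sub>R Hg (t, x, v)) *v h)) (at v)"
    by (simp add: matrix_vector_mult_diff_rdistrib scaleR_matrix_vector_assoc)
qed

definition kin_barrier :: "real \<Rightarrow> real \<times> (real^'n) \<times> (real^'n) \<Rightarrow> real" where
  "kin_barrier C = (\<lambda>(t, x, v). exp (C * t) * (1 + (norm x)\<^sup>2 + (norm v)\<^sup>2))"

definition kin_barrier_transport :: "real \<Rightarrow> real \<times> (real^'n) \<times> (real^'n) \<Rightarrow> real" where
  "kin_barrier_transport C =
     (\<lambda>(t, x, v). exp (C * t) * (C * (1 + (norm x)\<^sup>2 + (norm v)\<^sup>2) + 2 * (x \<bullet> v)))"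

definition kin_barrier_grad :: "real \<Rightarrow> real \<times> (real^'n) \<times> (real^'n) \<Rightarrow> real^'n" where
  "kin_barrier_grad C = (\<lambda>(t, x, v). (2 * exp (C * t)) *\<^sub>R v)"

definition kin_barrier_hess :: "real \<Rightarrow> real \<times> (real^'n) \<times> (real^'n) \<Rightarrow> real^'n^'n" where
  "kin_barrier_hess C = (\<lambda>(t, x, v). (2 * exp (C * t)) *\<^sub>R mat 1)"

lemma kin_C2_kin_barrier:
  "kin_C2 T \<omega> (kin_barrier C) (kin_barrier_transport C) (kin_barrier_grad C) (kin_barrier_hess C)"
  unfolding kin_C2_def
proof (intro conjI allI impI)
  show "continuous_on (cyl T \<omega>) (kin_barrier C)"
    unfolding kin_barrier_def case_prod_unfold by (intro continuous_intros)
  show "continuous_on (cyl T \<omega>) (kin_barrier_transport C)"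
    unfolding kin_barrier_transport_def case_prod_unfold by (intro continuous_intros)
  show "continuous_on (cyl T \<omega>) (kin_barrier_grad C)"
    unfolding kin_barrier_grad_def case_prod_unfold by (intro continuous_intros)
  show "continuous_on (cyl T \<omega>) (kin_barrier_hess C)"
    unfolding kin_barrier_hess_def case_prod_unfold by (intro continuous_intros)
  fix t :: real and x v :: "real^'n"
  have "((\<lambda>s. exp (C * (t + s)) * (1 + (x + s *\<^sub>R v) \<bullet> (x + s *\<^sub>R v) + v \<bullet> v))
      has_real_derivative kin_barrier_transport C (t, x, v)) (at 0)"
    by (auto intro!: derivative_eq_intros
        simp: kin_barrier_transport_def power2_norm_eq_inner inner_commute algebra_simps)
  then show "((\<lambda>s. kin_barrier C (t + s, x + s *\<^sub>R v, v)) has_real_derivative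
      kin_barrier_transport C (t, x, v)) (at 0 within {s. t + s \<le> T})"
    by (simp add: kin_barrier_def power2_norm_eq_inner has_field_derivative_at_within)
  have "((\<lambda>w. exp (C * t) * (1 + x \<bullet> x + w \<bullet> w)) has_derivative
      (\<lambda>h. kin_barrier_grad C (t, x, v) \<bullet> h)) (at v)"
    by (auto intro!: derivative_eq_intros simp: kin_barrier_grad_def inner_commute algebra_simps)
  then show "((\<lambda>w. kin_barrier C (t, x, w)) has_derivative
      (\<lambda>h. kin_barrier_grad C (t, x, v) \<bullet> h)) (at v)"
    by (simp add: kin_barrier_def power2_norm_eq_inner)
  have "((\<lambda>w. (2 * exp (C * t)) *\<^sub>R w) has_derivative (\<lambda>h. (2 * exp (C * t)) *\<^sub>R h)) (at v)"
    by (auto intro!: derivative_eq_intros)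
  then show "((\<lambda>w. kin_barrier_grad C (t, x, w)) has_derivative
      (\<lambda>h. kin_barrier_hess C (t, x, v) *v h)) (at v)"
    by (simp add: kin_barrier_grad_def kin_barrier_hess_def scaleR_matrix_vector_assoc[symmetric])
qed

lemma kin_barrier_pos: "0 < kin_barrier C q"
  by (simp add: kin_barrier_def case_prod_unfold add_pos_nonneg)

lemma kin_barrier_ge_norm:
  assumes "0 \<le> C" and "0 \<le> t"
  shows "1 + (norm (x, v))\<^sup>2 \<le> kin_barrier C (t, x, v)"
proof -
  have "1 \<le> exp (C * t)" using assms by simp
  then have "1 * (1 + (norm x)\<^sup>2 + (norm v)\<^sup>2) \<le> exp (C * t) * (1 + (norm x)\<^sup>2 + (norm v)\<^sup>2)"
    by (intro mult_right_mono) auto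
  then show ?thesis by (simp add: kin_barrier_def norm_Pair)
qed

lemma japanese_mult_norm_le: "japanese v * norm v \<le> 1 + (norm v)\<^sup>2"
proof -
  have "2 * (japanese v * norm v) \<le> (japanese v)\<^sup>2 + (norm v)\<^sup>2"
    using sum_squares_bound[of "japanese v" "norm v"] by (simp add: power2_eq_square)
  then show ?thesis by (simp add: japanese_def)
qed

lemma kin_barrier_strict_supersolution:
  fixes M :: "real^'n^'n" and b x v :: "real^'n"
  assumes M: "\<forall>\<xi>. (M *v \<xi>) \<bullet> \<xi> \<le> Lam * (norm \<xi>)\<^sup>2"
    and b: "\<forall>\<xi>. \<bar>b \<bullet> \<xi>\<bar> \<le> Lam * japanese v * norm \<xi>"
    and Lam: "0 \<le> Lam" and C: "1 + 2 * Lam + 2 * real CARD('n) * Lam \<le> C"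
  shows "0 < kin_barrier_transport C (t, x, v) - trace (M ** kin_barrier_hess C (t, x, v))
           - b \<bullet> kin_barrier_grad C (t, x, v)"
proof -
  define \<psi> where "\<psi> = 1 + (norm x)\<^sup>2 + (norm v)\<^sup>2"
  have \<psi>1: "1 \<le> \<psi>" by (simp add: \<psi>_def)
  have "real CARD('n) * Lam * 1 \<le> real CARD('n) * Lam * \<psi>"
    using \<psi>1 Lam by (intro mult_left_mono) auto
  then have tr: "trace M \<le> real CARD('n) * Lam * \<psi>"
    using trace_le_of_quadratic_form_le[OF M] by linarith
  have "b \<bullet> v \<le> Lam * (japanese v * norm v)"
    using b[rule_format, of v] by (simp add: mult.assoc)
  also have "\<dots> \<le> Lam * \<psi>"
  proof (rule mult_left_mono[OF _ Lam])
    show "japanese v * norm v \<le> \<psi>"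
      using japanese_mult_norm_le[of v] zero_le_power2[of "norm x"] unfolding \<psi>_def by linarith
  qed
  finally have bv: "b \<bullet> v \<le> Lam * \<psi>" .
  have xv: "1 - \<psi> \<le> 2 * (x \<bullet> v)"
    using Cauchy_Schwarz_ineq2[of x v] sum_squares_bound[of "norm x" "norm v"]
    by (simp add: \<psi>_def power2_eq_square)
  have "1 \<le> (C - 1 - 2 * Lam - 2 * real CARD('n) * Lam) * \<psi> + 1"
    using C \<psi>1 by simp
  also have "\<dots> \<le> C * \<psi> + 2 * (x \<bullet> v) - 2 * trace M - 2 * (b \<bullet> v)"
    using tr bv xv by (simp add: algebra_simps)
  finally have "0 < exp (C * t) * (C * \<psi> + 2 * (x \<bullet> v) - 2 * trace M - 2 * (b \<bullet> v))"
    by simp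
  then show ?thesis
    by (simp add: kin_barrier_transport_def kin_barrier_hess_def kin_barrier_grad_def trace_mult_scaleR_mat_1
        \<psi>_def algebra_simps)
qed

lemma kin_barrier_perturbation_attains_sup:
  fixes f :: "real \<times> (real^'n) \<times> (real^'n) \<Rightarrow> real"
  assumes f_cont: "continuous_on (closure (cyl T \<omega>)) f" and f_bdd: "bounded (f ` closure (cyl T \<omega>))"
    and "0 < \<epsilon>" and "0 \<le> C" and p: "p \<in> closure (cyl T \<omega>)"
  obtains q where "q \<in> closure (cyl T \<omega>)"
    and "\<And>y. y \<in> closure (cyl T \<omega>) \<Longrightarrow> f y - \<epsilon> * kin_barrier C y \<le> f q - \<epsilon> * kin_barrier C q"
proof -
  define g where "g y = f y - \<epsilon> * kin_barrier C y" for y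
  obtain F where F: "\<And>y. y \<in> closure (cyl T \<omega>) \<Longrightarrow> f y \<le> F"
    using bounded_imp_bdd_above[OF f_bdd] by (auto simp: bdd_above_def)
  define r where "r = sqrt (\<bar>F - g p\<bar> / \<epsilon>)"
  have "closure (cyl T \<omega>) \<subseteq> {0..T} \<times> UNIV"
    by (intro closure_minimal) (auto simp: cyl_def closed_Times)
  then have "g y < g p" if y: "y \<in> closure (cyl T \<omega>)" "y \<notin> {0..T} \<times> cball 0 r" for y
  proof (cases y)
    case (fields t x v)
    then have "0 \<le> t" and "r < norm (x, v)" using y \<open>closure (cyl T \<omega>) \<subseteq> _\<close> by auto
    then have "r\<^sup>2 < (norm (x, v))\<^sup>2" using \<open>0 < \<epsilon>\<close> by (intro power_strict_mono) (auto simp: r_def)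
    then have "\<bar>F - g p\<bar> < \<epsilon> * (1 + (norm (x, v))\<^sup>2)"
      using \<open>0 < \<epsilon>\<close> by (simp add: r_def field_simps)
    also have "\<dots> \<le> \<epsilon> * kin_barrier C y"
      using kin_barrier_ge_norm[OF \<open>0 \<le> C\<close> \<open>0 \<le> t\<close>] \<open>0 < \<epsilon>\<close> fields by simp
    finally show ?thesis using F[OF y(1)] by (simp add: g_def)
  qed
  moreover have "continuous_on (closure (cyl T \<omega>)) g"
    unfolding g_def kin_barrier_def case_prod_unfold by (intro continuous_intros f_cont)
  ultimately show ?thesis
    using continuous_attains_sup_off_compact[of "closure (cyl T \<omega>)" "{0..T} \<times> cball 0 r" g p] p that
    by (auto simp: g_def compact_Times)
qed

lemma kin_barrier_perturbation_interior_max: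
  fixes f :: "real \<times> (real^'n) \<times> (real^'n) \<Rightarrow> real"
  assumes f_cont: "continuous_on (closure (cyl T \<omega>)) f" and f_bdd: "bounded (f ` closure (cyl T \<omega>))"
    and "0 \<le> C" and p: "p \<in> cyl T \<omega>" and "M < f p"
    and boundary: "\<And>q. q \<in> closure (cyl T \<omega>) \<Longrightarrow> q \<notin> cyl T \<omega> \<Longrightarrow> f q \<le> M"
  obtains \<epsilon> q where "0 < \<epsilon>" and "q \<in> cyl T \<omega>"
    and "\<forall>y\<in>cyl T \<omega>. f y - \<epsilon> * kin_barrier C y \<le> f q - \<epsilon> * kin_barrier C q"
proof -
  define \<epsilon> where "\<epsilon> = (f p - M) / (2 * kin_barrier C p)"
  have \<epsilon>: "0 < \<epsilon>" and gp: "M < f p - \<epsilon> * kin_barrier C p"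
    using \<open>M < f p\<close> kin_barrier_pos[of C p] by (auto simp: \<epsilon>_def field_simps)
  have "p \<in> closure (cyl T \<omega>)" using p closure_subset by blast
  then obtain q where q: "q \<in> closure (cyl T \<omega>)" and max:
    "\<And>y. y \<in> closure (cyl T \<omega>) \<Longrightarrow> f y - \<epsilon> * kin_barrier C y \<le> f q - \<epsilon> * kin_barrier C q"
    using kin_barrier_perturbation_attains_sup[OF f_cont f_bdd \<epsilon> \<open>0 \<le> C\<close>] by blast
  have "q \<in> cyl T \<omega>"
  proof (rule ccontr)
    assume "q \<notin> cyl T \<omega>"
    then have "f q - \<epsilon> * kin_barrier C q < f p - \<epsilon> * kin_barrier C p"
      using boundary[OF q] gp \<epsilon> kin_barrier_pos[of C q] by (smt (verit) mult_pos_pos)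
    then show False using max[OF \<open>p \<in> closure (cyl T \<omega>)\<close>] by linarith
  qed
  moreover have "f y - \<epsilon> * kin_barrier C y \<le> f q - \<epsilon> * kin_barrier C q" if "y \<in> cyl T \<omega>" for y
    using max closure_subset that by blast
  ultimately show ?thesis using that[OF \<epsilon>] by blast
qed

lemma kin_operator_pos_at_perturbed_max:
  fixes M :: "real^'n^'n" and b :: "real^'n"
  assumes f: "kin_C2 T \<omega> f Tf Gf Hf" and \<omega>: "open \<omega>" and "0 < \<epsilon>"
    and q: "(t, x, v) \<in> cyl T \<omega>"
    and max: "\<forall>y\<in>cyl T \<omega>. f y - \<epsilon> * kin_barrier C y \<le> f (t, x, v) - \<epsilon> * kin_barrier C (t, x, v)"
    and M_sym: "transpose M = M" and M_psd: "\<forall>\<xi>. 0 \<le> (M *v \<xi>) \<bullet> \<xi>"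
    and M_bd: "\<forall>\<xi>. (M *v \<xi>) \<bullet> \<xi> \<le> Lam * (norm \<xi>)\<^sup>2"
    and b_bd: "\<forall>\<xi>. \<bar>b \<bullet> \<xi>\<bar> \<le> Lam * japanese v * norm \<xi>"
    and Lam: "0 \<le> Lam" and C: "1 + 2 * Lam + 2 * real CARD('n) * Lam \<le> C"
  shows "0 < Tf (t, x, v) - trace (M ** Hf (t, x, v)) - b \<bullet> Gf (t, x, v)"
proof -
  let ?q = "(t, x, v)"
  note u = kin_C2_diff_scaled[OF f kin_C2_kin_barrier[of T \<omega> C], where c = \<epsilon>]
  have transport: "\<epsilon> * kin_barrier_transport C ?q \<le> Tf ?q"
    using kin_C2_max_transport_nonneg[OF u \<omega> q max] by simp
  have grad: "Gf ?q = \<epsilon> *\<^sub>R kin_barrier_grad C ?q"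
    using kin_C2_max_grad_eq_0[OF u \<omega> q max] by simp
  have "trace (M ** (Hf ?q - \<epsilon> *\<^sub>R kin_barrier_hess C ?q)) \<le> 0"
    using kin_C2_max_hess_nonpos[OF u \<omega> q max] by (intro trace_mult_nsd_nonpos M_sym M_psd) blast
  then have hess: "trace (M ** Hf ?q) \<le> \<epsilon> * trace (M ** kin_barrier_hess C ?q)"
    by (simp add: trace_mul_sym[of M] trace_diff_scaleR_mult)
  have "0 < \<epsilon> * (kin_barrier_transport C ?q - trace (M ** kin_barrier_hess C ?q) - b \<bullet> kin_barrier_grad C ?q)"
    using kin_barrier_strict_supersolution[OF M_bd b_bd Lam C] \<open>0 < \<epsilon>\<close> by simp
  then show ?thesis
    using transport hess by (simp add: grad algebra_simps)
qed

lemma parabolic_boundary_eq: "0 < T \<Longrightarrow> parabolic_boundary T \<omega> = closure (cyl T \<omega>) - cyl T \<omega>"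
  by (simp add: parabolic_boundary_def cyl_def closure_Times)

lemma le_SUP_parabolic_boundary:
  fixes f :: "real \<times> (real^'n) \<times> (real^'n) \<Rightarrow> real"
  assumes "0 < T" and "bounded (f ` closure (cyl T \<omega>))"
    and "q \<in> closure (cyl T \<omega>)" and "q \<notin> cyl T \<omega>"
  shows "f q \<le> (SUP y\<in>parabolic_boundary T \<omega>. f y)"
proof (rule cSUP_upper)
  show "q \<in> parabolic_boundary T \<omega>" using assms by (simp add: parabolic_boundary_eq)
  show "bdd_above (f ` parabolic_boundary T \<omega>)"
    unfolding parabolic_boundary_eq[OF \<open>0 < T\<close>]
    using assms(2) by (meson Diff_subset bounded_imp_bdd_above bounded_subset image_mono)
qed

theorem lemmaA1:
  fixes \<omega> :: "((real^'n) \<times> (real^'n)) set"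
    and T lam Lam :: real
    and A :: "real \<times> ((real^'n) \<times> (real^'n)) \<Rightarrow> real^'n^'n"
    and B :: "real \<times> ((real^'n) \<times> (real^'n)) \<Rightarrow> real^'n"
    and f Tf :: "real \<times> ((real^'n) \<times> (real^'n)) \<Rightarrow> real"
    and Gv :: "real \<times> ((real^'n) \<times> (real^'n)) \<Rightarrow> real^'n"
    and Hv :: "real \<times> ((real^'n) \<times> (real^'n)) \<Rightarrow> real^'n^'n"
  assumes dom: "open \<omega>" "connected \<omega>" "\<omega> \<noteq> {}"
    and T: "T > 0"
    and lam: "0 < lam" "lam < Lam"
    and A_cont: "continuous_on (cyl T \<omega>) A"
    and A_sym: "\<forall>p\<in>cyl T \<omega>. transpose (A p) = A p"
    and A_ell: "\<forall>p\<in>cyl T \<omega>. \<forall>\<xi>. lam * (norm \<xi>)\<^sup>2 \<le> (A p *v \<xi>) \<bullet> \<xi> \<and>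
                                  (A p *v \<xi>) \<bullet> \<xi> \<le> Lam * (norm \<xi>)\<^sup>2"
    and B_cont: "continuous_on (cyl T \<omega>) B"
    and B_bd: "\<forall>t x v \<xi>. (t, (x, v)) \<in> cyl T \<omega> \<longrightarrow>
                 \<bar>B (t, (x, v)) \<bullet> \<xi>\<bar> \<le> Lam * japanese v * norm \<xi>"
    and f_kin: "kin_C2 T \<omega> f Tf Gv Hv"
    and f_cont: "continuous_on (closure (cyl T \<omega>)) f"
    and f_bdd: "bounded (f ` closure (cyl T \<omega>))"
    and f_sub: "\<forall>p\<in>cyl T \<omega>. Tf p - trace (A p ** Hv p) - B p \<bullet> Gv p \<le> 0"
  shows "\<forall>p\<in>cyl T \<omega>. f p \<le> (SUP q\<in>parabolic_boundary T \<omega>. f q)"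
proof -
  define M where "M = (SUP q\<in>parabolic_boundary T \<omega>. f q)"
  define C where "C = 1 + 2 * Lam + 2 * real CARD('n) * Lam"
  have Lam: "0 \<le> Lam" using lam by simp
  then have "0 \<le> C" by (simp add: C_def)
  have boundary: "f q \<le> M" if "q \<in> closure (cyl T \<omega>)" "q \<notin> cyl T \<omega>" for q
    unfolding M_def using le_SUP_parabolic_boundary[OF T f_bdd that] .
  show ?thesis
    unfolding M_def[symmetric]
  proof (rule ballI, rule ccontr)
    fix p assume "p \<in> cyl T \<omega>" and "\<not> f p \<le> M"
    then have "M < f p" by simp
    then obtain \<epsilon> q where \<epsilon>: "0 < \<epsilon>" and q: "q \<in> cyl T \<omega>"
      and max: "\<forall>y\<in>cyl T \<omega>. f y - \<epsilon> * kin_barrier C y \<le> f q - \<epsilon> * kin_barrier C q"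
      using kin_barrier_perturbation_interior_max[OF f_cont f_bdd \<open>0 \<le> C\<close> \<open>p \<in> cyl T \<omega>\<close> _ boundary]
      by blast
    obtain t x v where q_eq: "q = (t, x, v)" by (cases q)
    have "0 < Tf q - trace (A q ** Hv q) - B q \<bullet> Gv q"
      unfolding q_eq
    proof (rule kin_operator_pos_at_perturbed_max[OF f_kin dom(1) \<epsilon> q[unfolded q_eq] max[unfolded q_eq]
          _ _ _ _ Lam])
      show "transpose (A (t, x, v)) = A (t, x, v)"
        and "\<forall>\<xi>. (A (t, x, v) *v \<xi>) \<bullet> \<xi> \<le> Lam * (norm \<xi>)\<^sup>2"
        and "\<forall>\<xi>. \<bar>B (t, x, v) \<bullet> \<xi>\<bar> \<le> Lam * japanese v * norm \<xi>"
        using A_sym A_ell B_bd q q_eq by blast+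
      show "\<forall>\<xi>. 0 \<le> (A (t, x, v) *v \<xi>) \<bullet> \<xi>"
        using A_ell q q_eq lam by (smt (verit) mult_nonneg_nonneg zero_le_power2)
    qed (simp add: C_def)
    then show False using f_sub q by fastforce
  qed
qed

end
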